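(* Let $X$ be a countably infinite set, $W\subseteq\mathbb R^X$ containing the worlds below, and $\succeq$ a preorder on $W$ satisfying Strong Pareto and Permutation Invariance. Let $A,B\subseteq X$ be infinite and disjoint, and $k,l\in\mathbb R$ with $k\neq l$. Define $w(x)=k$ for $x\in A$, $w(x)=l$ otherwise, and $v(x)=k$ for $x\in B$, $v(x)=l$ otherwise. Then $w$ and $v$ are incomparable: neither $w\succeq v$ nor $v\succeq w$.
   Context: For a preorder $\succeq$, $w\succ v$ means $w\succeq v$ and not $v\succeq w$. For a permutation $\pi$ of $X$, $\pi(w)(x)=w(\pi(x))$. Strong Pareto: for all $w,v\in W$, if $w(x)\ge v(x)$ for all $x$ and $w(x)>v(x)$ for some $x$, then $w\succ v$. Permutation Invariance: for all $w,v\in W$ and every permutation $\pi$ of $X$, $w\succeq v$ iff $\pi(w)\succeq\pi(v)$. (Here $W=\{k,l\}^X$ may be taken, so that $W$ is closed under permutations.) *)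

theory Defs
  imports Complex_Main "HOL-Library.Countable_Set"
begin

definition preorder_on :: "('x \<Rightarrow> real) set \<Rightarrow> (('x \<Rightarrow> real) \<Rightarrow> ('x \<Rightarrow> real) \<Rightarrow> bool) \<Rightarrow> bool" where
  "preorder_on W R \<longleftrightarrow> (\<forall>w\<in>W. R w w) \<and> (\<forall>u\<in>W. \<forall>v\<in>W. \<forall>w\<in>W. R u v \<longrightarrow> R v w \<longrightarrow> R u w)"

definition strictly_better :: "(('x \<Rightarrow> real) \<Rightarrow> ('x \<Rightarrow> real) \<Rightarrow> bool) \<Rightarrow> ('x \<Rightarrow> real) \<Rightarrow> ('x \<Rightarrow> real) \<Rightarrow> bool" where
  "strictly_better R w v \<longleftrightarrow> R w v \<and> \<not> R v w"

definition strong_pareto :: "('x \<Rightarrow> real) set \<Rightarrow> (('x \<Rightarrow> real) \<Rightarrow> ('x \<Rightarrow> real) \<Rightarrow> bool) \<Rightarrow> bool" where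
  "strong_pareto W R \<longleftrightarrow> (\<forall>w\<in>W. \<forall>v\<in>W. (\<forall>x. w x \<ge> v x) \<and> (\<exists>x. w x > v x) \<longrightarrow> strictly_better R w v)"

definition perm_world :: "('x \<Rightarrow> 'x) \<Rightarrow> ('x \<Rightarrow> real) \<Rightarrow> ('x \<Rightarrow> real)" where
  "perm_world \<pi> w = (\<lambda>x. w (\<pi> x))"

definition permutation_invariant :: "('x \<Rightarrow> real) set \<Rightarrow> (('x \<Rightarrow> real) \<Rightarrow> ('x \<Rightarrow> real) \<Rightarrow> bool) \<Rightarrow> bool" where
  "permutation_invariant W R \<longleftrightarrow> (\<forall>w\<in>W. \<forall>v\<in>W. \<forall>\<pi>. bij \<pi> \<longrightarrow> (R w v \<longleftrightarrow> R (perm_world \<pi> w) (perm_world \<pi> v)))"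

end

theory Submission
  imports Defs
begin

text \<open>Write \<open>w(S)\<close> for the world that is \<open>k\<close> on \<open>S\<close> and \<open>l\<close> elsewhere. On a countable
population any two partitions of \<open>A \<union> B\<close> into two infinite parts are carried into each other by a
permutation of the population, so permutation invariance turns \<open>w(A) \<succeq> w(B)\<close> into
\<open>w(S) \<succeq> w(U)\<close> for every such partition \<open>(S, U)\<close>, in particular \<open>w(B) \<succeq> w(A)\<close>. Moving a single
person across the partition is a Pareto change: for \<open>k > l\<close> and \<open>a \<in> A\<close> this gives the cycle
\<open>w(A) \<succ> w(A - {a}) \<succeq> w(B \<union> {a}) \<succeq> w(B) \<succeq> w(A)\<close>, impossible in a preorder; for \<open>k < l\<close> a
person of \<open>B\<close> is moved into \<open>A\<close> instead.\<close>

lemma countable_infinite_ex_bij_betw: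
  assumes "countable S" "infinite S" "countable T" "infinite T"
  shows "\<exists>f. bij_betw f S T"
  using bij_betw_trans[OF to_nat_on_infinite bij_betw_from_nat_into] assms by blast

lemma ex_bij_preimages_eq:
  assumes f: "bij_betw f S A" and g: "bij_betw g U B"
    and "S \<inter> U = {}" "A \<inter> B = {}" and SU: "S \<union> U = A \<union> B"
  shows "\<exists>\<pi>. bij \<pi> \<and> \<pi> -` A = S \<and> \<pi> -` B = U"
proof -
  define h where "h x = (if x \<in> S then f x else g x)" for x
  define \<pi> where "\<pi> x = (if x \<in> S \<union> U then h x else id x)" for x
  have "bij_betw h (S \<union> U) (A \<union> B)"
    unfolding h_def using assms by (intro bij_betw_disjoint_Un)
  moreover have "bij_betw id (- (S \<union> U)) (- (A \<union> B))"
    using SU by simp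
  ultimately have "bij_betw \<pi> (S \<union> U \<union> - (S \<union> U)) (A \<union> B \<union> - (A \<union> B))"
    unfolding \<pi>_def by (rule bij_betw_disjoint_Un) auto
  then have "bij \<pi>"
    by (simp only: Compl_partition)
  moreover have "\<pi> x \<in> A \<longleftrightarrow> x \<in> S" "\<pi> x \<in> B \<longleftrightarrow> x \<in> U" for x
    by (cases "x \<in> S"; cases "x \<in> U")
      (use assms bij_betwE[OF f] bij_betwE[OF g] in \<open>auto simp: \<pi>_def h_def\<close>)
  then have "\<pi> -` A = S" "\<pi> -` B = U"
    by auto
  ultimately show ?thesis
    by blast
qed

definition level_world :: "real \<Rightarrow> real \<Rightarrow> 'x set \<Rightarrow> 'x \<Rightarrow> real" where
  "level_world k l S = (\<lambda>x. if x \<in> S then k else l)"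

lemma level_world_in: "{f. \<forall>x. f x \<in> {k, l}} \<subseteq> W \<Longrightarrow> level_world k l S \<in> W"
  unfolding level_world_def by (erule subsetD) simp

lemma level_world_Compl: "level_world k l S = level_world l k (- S)"
  unfolding level_world_def by auto

lemma perm_world_level_world: "perm_world \<pi> (level_world k l S) = level_world k l (\<pi> -` S)"
  unfolding perm_world_def level_world_def by auto

lemma strictly_better_level_world_psubset:
  assumes sp: "strong_pareto W R" and W_contains: "{f. \<forall>x. f x \<in> {k, l}} \<subseteq> W"
    and "l < k" "S \<subset> T"
  shows "strictly_better R (level_world k l T) (level_world k l S)"
proof -
  obtain a where "a \<in> T" "a \<notin> S"
    using \<open>S \<subset> T\<close> by blast
  then have "level_world k l T a > level_world k l S a"
    using \<open>l < k\<close> by (simp add: level_world_def)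
  moreover have "\<forall>x. level_world k l T x \<ge> level_world k l S x"
    using \<open>l < k\<close> \<open>S \<subset> T\<close> by (auto simp: level_world_def)
  ultimately show ?thesis
    using sp level_world_in[OF W_contains] unfolding strong_pareto_def by blast
qed

lemma permutation_invariant_level_world_partition:
  assumes countable: "countable (UNIV :: 'x set)"
    and W_contains: "{f. \<forall>x. f x \<in> {k, l}} \<subseteq> W"
    and pi: "permutation_invariant W R"
    and R_AB: "R (level_world k l A) (level_world k l B)"
    and "infinite A" "infinite B" "A \<inter> B = {}"
    and "infinite S" "infinite U" "S \<inter> U = {}" "S \<union> U = A \<union> B"
  shows "R (level_world k l S) (level_world k l (U :: 'x set))"
proof -
  have countable_set: "countable X" for X :: "'x set"
    using countable_subset[OF subset_UNIV countable] .
  obtain f where f: "bij_betw f S A"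
    using countable_infinite_ex_bij_betw[OF countable_set _ countable_set] \<open>infinite S\<close> \<open>infinite A\<close> by blast
  obtain g where g: "bij_betw g U B"
    using countable_infinite_ex_bij_betw[OF countable_set _ countable_set] \<open>infinite U\<close> \<open>infinite B\<close> by blast
  obtain \<pi> where "bij \<pi>" "\<pi> -` A = S" "\<pi> -` B = U"
    using ex_bij_preimages_eq[OF f g \<open>S \<inter> U = {}\<close> \<open>A \<inter> B = {}\<close> \<open>S \<union> U = A \<union> B\<close>] by blast
  moreover have "R (perm_world \<pi> (level_world k l A)) (perm_world \<pi> (level_world k l B))"
    using pi R_AB \<open>bij \<pi>\<close> level_world_in[OF W_contains]
    unfolding permutation_invariant_def by simp
  ultimately show ?thesis
    by (simp add: perm_world_level_world)
qed

lemma preorder_on_not_strictly_better: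
  assumes "preorder_on W R" "a \<in> W" "b \<in> W" "c \<in> W" "d \<in> W"
    and "R b c" "R c d" "R d a"
  shows "\<not> strictly_better R a b"
proof -
  have "R b d"
    using assms unfolding preorder_on_def by blast
  then have "R b a"
    using assms unfolding preorder_on_def by blast
  then show ?thesis
    unfolding strictly_better_def by blast
qed

lemma level_world_not_preferred:
  fixes R :: "('x \<Rightarrow> real) \<Rightarrow> ('x \<Rightarrow> real) \<Rightarrow> bool"
  assumes countable: "countable (UNIV :: 'x set)"
    and W_contains: "{f. \<forall>x. f x \<in> {k, l}} \<subseteq> W"
    and pre: "preorder_on W R" and sp: "strong_pareto W R" and pi: "permutation_invariant W R"
    and "infinite A" "infinite B" and disj: "A \<inter> B = {}" and "k \<noteq> l"
  shows "\<not> R (level_world k l A) (level_world k l B)"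
proof
  let ?w = "level_world k l"
  assume R_AB: "R (?w A) (?w B)"
  have R_partition: "R (?w S) (?w U)"
    if "infinite S" "infinite U" "S \<inter> U = {}" "S \<union> U = A \<union> B" for S U
    using permutation_invariant_level_world_partition[OF countable W_contains pi R_AB] assms that
    by blast
  have R_BA: "R (?w B) (?w A)"
    using R_partition assms by blast
  have in_W: "?w S \<in> W" for S
    using level_world_in[OF W_contains] .
  show False
  proof (cases "l < k")
    case True
    obtain a where "a \<in> A"
      using \<open>infinite A\<close> infinite_imp_nonempty by blast
    have "R (?w (A - {a})) (?w (insert a B))"
      by (rule R_partition) (use assms \<open>a \<in> A\<close> in auto)
    moreover have "R (?w (insert a B)) (?w B)"
      using strictly_better_level_world_psubset[OF sp W_contains True, of B "insert a B"]
        \<open>a \<in> A\<close> disj unfolding strictly_better_def by blast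
    moreover have "strictly_better R (?w A) (?w (A - {a}))"
      using strictly_better_level_world_psubset[OF sp W_contains True] \<open>a \<in> A\<close> by blast
    ultimately show False
      using preorder_on_not_strictly_better[OF pre] R_BA in_W by blast
  next
    case False
    then have "k < l"
      using \<open>k \<noteq> l\<close> by simp
    \<comment> \<open>Pareto is applied to \<open>level_world l k\<close> on complements, see \<open>level_world_Compl\<close>.\<close>
    have W_contains': "{f. \<forall>x. f x \<in> {l, k}} \<subseteq> W"
      using W_contains by (simp add: insert_commute)
    obtain b where "b \<in> B"
      using \<open>infinite B\<close> infinite_imp_nonempty by blast
    have "R (?w (insert b A)) (?w (B - {b}))"
      by (rule R_partition) (use assms \<open>b \<in> B\<close> in auto)
    moreover have "R (?w (B - {b})) (?w B)"
      using strictly_better_level_world_psubset[OF sp W_contains' \<open>k < l\<close>, of "- B" "- (B - {b})"]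
        \<open>b \<in> B\<close> unfolding strictly_better_def level_world_Compl[of k l] by blast
    moreover have "strictly_better R (?w A) (?w (insert b A))"
      using strictly_better_level_world_psubset[OF sp W_contains' \<open>k < l\<close>, of "- insert b A" "- A"]
        \<open>b \<in> B\<close> disj unfolding level_world_Compl[of k l] by blast
    ultimately show False
      using preorder_on_not_strictly_better[OF pre] R_BA in_W by blast
  qed
qed

theorem mainTheorem5:
  fixes W :: "('x \<Rightarrow> real) set"
    and R :: "('x \<Rightarrow> real) \<Rightarrow> ('x \<Rightarrow> real) \<Rightarrow> bool"
    and A B :: "'x set"
    and k l :: real
  assumes countable_X: "countable (UNIV :: 'x set)"
    and infinite_X: "infinite (UNIV :: 'x set)"
    and W_contains: "{f. \<forall>x. f x \<in> {k, l}} \<subseteq> W"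
    and W_perm_closed: "\<And>\<pi> f. bij \<pi> \<Longrightarrow> f \<in> W \<Longrightarrow> perm_world \<pi> f \<in> W"
    and pre: "preorder_on W R"
    and sp: "strong_pareto W R"
    and pi: "permutation_invariant W R"
    and infA: "infinite A" and infB: "infinite B" and disj: "A \<inter> B = {}"
    and kl: "k \<noteq> l"
  shows "\<not> R (\<lambda>x. if x \<in> A then k else l) (\<lambda>x. if x \<in> B then k else l)
       \<and> \<not> R (\<lambda>x. if x \<in> B then k else l) (\<lambda>x. if x \<in> A then k else l)"
  using level_world_not_preferred[OF countable_X W_contains pre sp pi infA infB disj kl]
    level_world_not_preferred[OF countable_X W_contains pre sp pi infB infA _ kl] disj
  unfolding level_world_def by blast

end
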